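(* Let $\bm{X}=(E,M_1,\ldots,M_d,Y)^\top=(X_0,\ldots,X_{d+1})^\top$ satisfy $\bm{X}-\bm{\mu}_0=\bm{W}_0(\bm{X}-\bm{\mu}_0)+\bm{\varepsilon}$ with $\bm{\mu}_0=\mathrm{E}(\bm{X})$, where $\bm{W}_0$ is a real $(d+2)\times(d+2)$ matrix and $\bm{\varepsilon}=(\varepsilon_0,\ldots,\varepsilon_{d+1})^\top$ is mean zero, and suppose: (A1) the directed graph of $\bm{W}_0$ is acyclic; (A2) no mediator $M_i$ is a direct cause of $E$, and $Y$ is a direct cause of neither $E$ nor any $M_i$ (i.e. the first row and last column of $\bm{W}_0$ are zero); (A3$^*$) $\varepsilon_0,\ldots,\varepsilon_{d+1}$ are jointly normal and independent, and $\mathrm{Var}(\varepsilon_1)=\cdots=\mathrm{Var}(\varepsilon_d)=\sigma_*^2$ for some constant $\sigma_*>0$. Then $\bm{W}_0$ is identifiable from the joint distribution of $\bm{X}$: any matrix satisfying (A1), (A2) and (A3$^*$) (for some mean vector, error vector and $\sigma_*$) and generating the same joint distribution of $\bm{X}$ equals $\bm{W}_0$.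
   Context: Matrices are indexed from $0$. The directed graph of $\bm{W}_0$ has vertices $X_0,\ldots,X_{d+1}$ and an arrow $X_i\to X_j$ iff $W_{0,j,i}\neq0$; $X_i$ is a direct cause of $X_j$ iff $W_{0,j,i}\neq 0$. The variances of $\varepsilon_0$ and $\varepsilon_{d+1}$ are not required to equal $\sigma_*^2$. *)

theory Defs
  imports "HOL-Probability.Probability"
begin

text \<open>Variables are indexed 0..d+1 (n = d+2): X_0 = E, X_1..X_d = mediators, X_(d+1) = Y.
  Random vectors are functions 'a => nat => real, only indices < d+2 are meaningful.
  Matrices are nat => nat => real, W j i is the entry in row j, column i.\<close>

definition graph_of :: "nat \<Rightarrow> (nat \<Rightarrow> nat \<Rightarrow> real) \<Rightarrow> (nat \<times> nat) set" where
  "graph_of n W = {(i, j). i < n \<and> j < n \<and> W j i \<noteq> 0}"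

definition A1 :: "nat \<Rightarrow> (nat \<Rightarrow> nat \<Rightarrow> real) \<Rightarrow> bool" where
  "A1 d W \<longleftrightarrow> acyclic (graph_of (d + 2) W)"

definition A2 :: "nat \<Rightarrow> (nat \<Rightarrow> nat \<Rightarrow> real) \<Rightarrow> bool" where
  "A2 d W \<longleftrightarrow> (\<forall>i < d + 2. W 0 i = 0) \<and> (\<forall>j < d + 2. W j (d + 1) = 0)"

definition law :: "'a measure \<Rightarrow> nat \<Rightarrow> ('a \<Rightarrow> nat \<Rightarrow> real) \<Rightarrow> (nat \<Rightarrow> real) measure" where
  "law M d X = distr M (PiM {..<d + 2} (\<lambda>_. borel)) (\<lambda>\<omega>. restrict (X \<omega>) {..<d + 2})"

definition sem_model ::
  "'a measure \<Rightarrow> nat \<Rightarrow> (nat \<Rightarrow> nat \<Rightarrow> real) \<Rightarrow> ('a \<Rightarrow> nat \<Rightarrow> real) \<Rightarrow> ('a \<Rightarrow> nat \<Rightarrow> real)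
     \<Rightarrow> (nat \<Rightarrow> real) \<Rightarrow> real \<Rightarrow> bool" where
  "sem_model M d W X \<epsilon> s \<sigma> \<longleftrightarrow>
     prob_space M \<and>
     (\<forall>j < d + 2. (\<lambda>\<omega>. X \<omega> j) \<in> borel_measurable M) \<and>
     (\<forall>\<omega> \<in> space M. \<forall>j < d + 2.
        X \<omega> j - prob_space.expectation M (\<lambda>\<omega>'. X \<omega>' j)
          = (\<Sum>i < d + 2. W j i * (X \<omega> i - prob_space.expectation M (\<lambda>\<omega>'. X \<omega>' i))) + \<epsilon> \<omega> j) \<and>
     A1 d W \<and> A2 d W \<and>
     prob_space.indep_vars M (\<lambda>_. borel) (\<lambda>i \<omega>. \<epsilon> \<omega> i) {..<d + 2} \<and>
     (\<forall>i < d + 2. s i > 0 \<and> distributed M lborel (\<lambda>\<omega>. \<epsilon> \<omega> i) (normal_density 0 (s i))) \<and>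
     \<sigma> > 0 \<and> (\<forall>i. 1 \<le> i \<and> i \<le> d \<longrightarrow> s i = \<sigma>)"

end

theory Submission
  imports Defs
begin

text \<open>For a coefficient matrix \<open>W\<close> put
  \<open>\<epsilon>\<^sub>j = X\<^sub>j - \<Sum>\<^sub>i W\<^sub>j\<^sub>i X\<^sub>i\<close>. In the Gaussian SEM, \<open>\<epsilon>\<^sub>j\<close> is uncorrelated with every
  non-descendant of \<open>j\<close> and has variance \<open>s\<^sub>j\<^sup>2\<close>; with acyclicity this makes the covariance
  matrix \<open>\<Sigma>\<close> of \<open>X\<close> positive definite. Now let \<open>W\<close> and \<open>W'\<close> both fit \<open>\<Sigma>\<close>. If the
  \<open>W\<close>-parents of a mediator \<open>j\<close> lie in a set \<open>T\<close> of rows already known to agree, closed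
  under parents in both graphs, then \<open>W'\<^sub>j - W\<^sub>j\<close> is supported on \<open>W'\<close>-non-descendants of \<open>j\<close>,
  whence \<open>\<sigma>\<^sup>2 = \<sigma>'\<^sup>2 + Var((W'\<^sub>j - W\<^sub>j) X)\<close>. Applying this to a \<open>W\<close>-source and to a \<open>W'\<close>-source
  among the remaining mediators gives \<open>\<sigma>'\<^sup>2 \<le> \<sigma>\<^sup>2 \<le> \<sigma>'\<^sup>2\<close>, so the row difference has
  variance zero and vanishes; induction on \<open>T\<close>, starting from the exposure row (zero by (A2)),
  recovers all mediator rows. The outcome has no children in either graph, so the difference of
  its two rows is uncorrelated with both noises, hence has variance zero as well.\<close>

section \<open>Bilinear forms\<close>

lemma sum_indicator_mult:
  fixes f :: "nat \<Rightarrow> real"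
  assumes "j < n"
  shows "(\<Sum>l<n. indicator {j} l * f l) = f j"
proof -
  have "(\<Sum>l<n. indicator {j} l * f l) = (\<Sum>l<n. if l = j then f l else 0)"
    by (intro sum.cong refl) (simp add: indicator_def)
  also have "\<dots> = f j"
    unfolding sum.delta[OF finite_lessThan] using assms by simp
  finally show ?thesis .
qed

definition bilinear_form :: "(nat \<Rightarrow> nat \<Rightarrow> real) \<Rightarrow> nat \<Rightarrow> (nat \<Rightarrow> real) \<Rightarrow> (nat \<Rightarrow> real) \<Rightarrow> real"
  where "bilinear_form S n a b = (\<Sum>i<n. \<Sum>k<n. a i * S i k * b k)"

lemma bilinear_form_add_left:
  "bilinear_form S n (\<lambda>i. a i + b i) c = bilinear_form S n a c + bilinear_form S n b c"
  unfolding bilinear_form_def by (simp add: algebra_simps sum.distrib)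

lemma bilinear_form_add_right:
  "bilinear_form S n c (\<lambda>i. a i + b i) = bilinear_form S n c a + bilinear_form S n c b"
  unfolding bilinear_form_def by (simp add: algebra_simps sum.distrib)

lemma bilinear_form_diff_left:
  "bilinear_form S n (\<lambda>i. a i - b i) c = bilinear_form S n a c - bilinear_form S n b c"
  unfolding bilinear_form_def by (simp add: algebra_simps sum_subtractf)

lemma bilinear_form_diff_right:
  "bilinear_form S n c (\<lambda>i. a i - b i) = bilinear_form S n c a - bilinear_form S n c b"
  unfolding bilinear_form_def by (simp add: algebra_simps sum_subtractf)

lemma bilinear_form_mult_left:
  "bilinear_form S n (\<lambda>i. t * a i) c = t * bilinear_form S n a c"
  unfolding bilinear_form_def by (simp add: algebra_simps sum_distrib_left)

lemma bilinear_form_mult_right: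
  "bilinear_form S n c (\<lambda>i. t * a i) = t * bilinear_form S n c a"
  unfolding bilinear_form_def by (simp add: algebra_simps sum_distrib_left)

lemma bilinear_form_commute:
  assumes "\<And>i k. i < n \<Longrightarrow> k < n \<Longrightarrow> S i k = S k i"
  shows "bilinear_form S n a b = bilinear_form S n b a"
  unfolding bilinear_form_def using assms by (subst sum.swap) (auto intro!: sum.cong)

lemma bilinear_form_indicator_right:
  assumes "k < n"
  shows "bilinear_form S n a (indicator {k}) = (\<Sum>i<n. a i * S i k)"
proof -
  have "bilinear_form S n a (indicator {k}) = (\<Sum>i<n. \<Sum>j<n. indicator {k} j * (a i * S i j))"
    unfolding bilinear_form_def by (intro sum.cong refl) (rule mult.commute)
  also have "\<dots> = (\<Sum>i<n. a i * S i k)" by (simp only: sum_indicator_mult[OF assms])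
  finally show ?thesis .
qed

lemma bilinear_form_expand_right:
  "bilinear_form S n a b = (\<Sum>k<n. b k * bilinear_form S n a (indicator {k}))"
proof -
  have "(\<Sum>k<n. b k * bilinear_form S n a (indicator {k})) = (\<Sum>k<n. b k * (\<Sum>i<n. a i * S i k))"
    by (simp add: bilinear_form_indicator_right)
  then show ?thesis
    unfolding bilinear_form_def by (subst sum.swap) (simp add: sum_distrib_left algebra_simps)
qed

lemma nonneg_quadratic_imp_linear_coeff_eq_0:
  fixes c q :: real
  assumes "\<And>t. 0 \<le> 2 * t * c + t\<^sup>2 * q"
  shows "c = 0"
proof -
  have q: "0 \<le> q" using assms[of 1] assms[of "-1"] by simp
  then have q1: "0 < q + 1" by simp
  have "0 \<le> 2 * (- c / (q + 1)) * c + (- c / (q + 1))\<^sup>2 * q" by (rule assms)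
  also have "\<dots> = - (c\<^sup>2 * (q + 2)) / (q + 1)\<^sup>2"
    using q1 by (simp add: divide_simps power2_eq_square) algebra
  finally have "c\<^sup>2 * (q + 2) \<le> 0"
    using q1 by (simp add: divide_le_0_iff)
  then show ?thesis using q by (simp add: mult_le_0_iff)
qed

lemma psd_bilinear_form_eq_0:
  assumes sym: "\<And>i k. i < n \<Longrightarrow> k < n \<Longrightarrow> S i k = S k i"
    and psd: "\<And>x. 0 \<le> bilinear_form S n x x"
    and "bilinear_form S n a a = 0"
  shows "bilinear_form S n a b = 0"
proof (rule nonneg_quadratic_imp_linear_coeff_eq_0)
  fix t
  have "bilinear_form S n (\<lambda>i. a i + t * b i) (\<lambda>i. a i + t * b i)
      = 2 * t * bilinear_form S n a b + t\<^sup>2 * bilinear_form S n b b"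
    using assms(3) bilinear_form_commute[OF sym, where a = b and b = a]
    by (simp add: bilinear_form_add_left bilinear_form_add_right bilinear_form_mult_left
        bilinear_form_mult_right power2_eq_square algebra_simps)
  then show "0 \<le> 2 * t * bilinear_form S n a b + t\<^sup>2 * bilinear_form S n b b"
    using psd by metis
qed

section \<open>Covariance structure of a linear SEM\<close>

lemma finite_graph_of: "finite (graph_of n W)"
  by (rule finite_subset[of _ "{..<n} \<times> {..<n}"]) (auto simp: graph_of_def)

lemma parent_not_descendant:
  assumes "acyclic (graph_of n W)" "i < n" "j < n" "W j i \<noteq> 0"
  shows "(j, i) \<notin> (graph_of n W)\<^sup>*"
proof
  assume "(j, i) \<in> (graph_of n W)\<^sup>*"
  moreover have "(i, j) \<in> graph_of n W" using assms by (simp add: graph_of_def)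
  ultimately have "(i, i) \<in> (graph_of n W)\<^sup>+" by (simp add: rtrancl_into_trancl2)
  then show False using assms(1) by (simp add: acyclic_def)
qed

lemma sink_not_descendant:
  assumes "\<And>k. k < n \<Longrightarrow> W k j = 0" "k \<noteq> j"
  shows "(j, k) \<notin> (graph_of n W)\<^sup>*"
proof
  assume "(j, k) \<in> (graph_of n W)\<^sup>*"
  with assms(2) have "(j, k) \<in> (graph_of n W)\<^sup>+" by (simp add: rtrancl_eq_or_trancl)
  then obtain l where "(j, l) \<in> graph_of n W" by (blast dest: tranclD)
  then show False using assms(1) by (force simp: graph_of_def)
qed

definition parent_closed :: "nat \<Rightarrow> (nat \<Rightarrow> nat \<Rightarrow> real) \<Rightarrow> nat set \<Rightarrow> bool"
  where "parent_closed n W T \<longleftrightarrow> (\<forall>j\<in>T. \<forall>i<n. W j i \<noteq> 0 \<longrightarrow> i \<in> T)"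

lemma parent_closed_not_descendant:
  assumes "parent_closed n W T" "j \<notin> T" "i \<in> T"
  shows "(j, i) \<notin> (graph_of n W)\<^sup>*"
proof
  assume "(j, i) \<in> (graph_of n W)\<^sup>*"
  then have "j \<in> T"
  proof (induction rule: converse_rtrancl_induct)
    case base
    show ?case using assms(3) .
  next
    case (step x y)
    then show ?case using assms(1) by (auto simp: parent_closed_def graph_of_def)
  qed
  with assms(2) show False by contradiction
qed

lemma acyclic_graph_of_obtain_source:
  assumes "acyclic (graph_of n W)" "x \<in> R" "R \<subseteq> {..<n}"
  obtains j where "j \<in> R" "\<And>i. i < n \<Longrightarrow> W j i \<noteq> 0 \<Longrightarrow> i \<notin> R"
proof -
  have "wf (graph_of n W)" using finite_acyclic_wf[OF finite_graph_of assms(1)] .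
  then obtain j where "j \<in> R" "\<And>i. (i, j) \<in> graph_of n W \<Longrightarrow> i \<notin> R"
    using assms(2) by (rule wfE_min) blast
  with assms(3) show ?thesis by (intro that) (auto simp: graph_of_def)
qed

definition noise_coeffs :: "(nat \<Rightarrow> nat \<Rightarrow> real) \<Rightarrow> nat \<Rightarrow> nat \<Rightarrow> real"
  where "noise_coeffs W j i = indicator {j} i - W j i"

lemma noise_coeffs_solve:
  assumes "j < n" "z j = (\<Sum>i<n. W j i * z i) + e"
  shows "(\<Sum>i<n. noise_coeffs W j i * z i) = e"
proof -
  have "(\<Sum>i<n. noise_coeffs W j i * z i) = (\<Sum>i<n. indicator {j} i * z i) - (\<Sum>i<n. W j i * z i)"
    by (simp add: noise_coeffs_def left_diff_distrib sum_subtractf)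
  also have "\<dots> = z j - (\<Sum>i<n. W j i * z i)" by (simp only: sum_indicator_mult[OF assms(1)])
  finally show ?thesis using assms(2) by simp
qed

text \<open>What a linear SEM \<open>Z = W Z + \<epsilon>\<close> with covariance matrix \<open>S\<close> says about second
  moments: the noise \<open>\<epsilon>\<^sub>j\<close>, with coefficients \<open>noise_coeffs W j\<close> in \<open>Z\<close>, is uncorrelated with
  every non-descendant of \<open>j\<close> and has standard deviation \<open>s j\<close>.\<close>
locale sem_covariance =
  fixes n :: nat and W :: "nat \<Rightarrow> nat \<Rightarrow> real" and s :: "nat \<Rightarrow> real"
    and S :: "nat \<Rightarrow> nat \<Rightarrow> real"
  assumes symmetric: "i < n \<Longrightarrow> k < n \<Longrightarrow> S i k = S k i"
    and psd: "0 \<le> bilinear_form S n a a"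
    and acyclic_graph: "acyclic (graph_of n W)"
    and noise_uncorrelated: "j < n \<Longrightarrow> i < n \<Longrightarrow> (j, i) \<notin> (graph_of n W)\<^sup>* \<Longrightarrow>
      bilinear_form S n (noise_coeffs W j) (indicator {i}) = 0"
    and noise_variance: "j < n \<Longrightarrow> bilinear_form S n (noise_coeffs W j) (noise_coeffs W j) = (s j)\<^sup>2"
    and noise_sd_pos: "j < n \<Longrightarrow> 0 < s j"
begin

lemma noise_uncorrelated_combination:
  assumes "j < n" "\<And>k. k < n \<Longrightarrow> v k \<noteq> 0 \<Longrightarrow> (j, k) \<notin> (graph_of n W)\<^sup>*"
  shows "bilinear_form S n (noise_coeffs W j) v = 0"
proof -
  have "v k * bilinear_form S n (noise_coeffs W j) (indicator {k}) = 0" if "k < n" for k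
    using assms noise_uncorrelated[OF assms(1) that] that by (cases "v k = 0") auto
  then show ?thesis by (subst bilinear_form_expand_right) (simp add: sum.neutral)
qed

lemma noise_covariance_own:
  assumes "j < n"
  shows "bilinear_form S n (noise_coeffs W j) (indicator {j}) = (s j)\<^sup>2"
proof -
  have "bilinear_form S n (noise_coeffs W j) (W j) = 0"
    using assms parent_not_descendant[OF acyclic_graph]
    by (intro noise_uncorrelated_combination) auto
  moreover have "noise_coeffs W j = (\<lambda>i. indicator {j} i - W j i)"
    by (simp add: noise_coeffs_def fun_eq_iff)
  ultimately show ?thesis
    using noise_variance[OF assms] bilinear_form_diff_right[of S n "noise_coeffs W j" "indicator {j}" "W j"]
    by simp
qed

text \<open>Testing \<open>a\<close> against the noise of a descendant-maximal node \<open>z\<close> of its support isolates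
  \<open>a z * (s z)\<^sup>2\<close>.\<close>
lemma positive_definite:
  assumes "bilinear_form S n a a = 0" "i < n"
  shows "a i = 0"
proof (rule ccontr)
  let ?G = "graph_of n W" and ?A = "{i. i < n \<and> a i \<noteq> 0}"
  assume "a i \<noteq> 0"
  with assms(2) have "i \<in> ?A" by simp
  moreover have "wf ((?G\<^sup>+)\<inverse>)"
    using finite_acyclic_wf_converse[OF finite_graph_of acyclic_graph] wf_trancl trancl_converse by metis
  ultimately obtain z where z: "z \<in> ?A" and maximal: "\<And>y. (z, y) \<in> ?G\<^sup>+ \<Longrightarrow> y \<notin> ?A"
    by (metis (no_types, lifting) converse_iff wfE_min)
  have "bilinear_form S n (noise_coeffs W z) a = bilinear_form S n a (noise_coeffs W z)"
    by (rule bilinear_form_commute[OF symmetric])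
  also have "\<dots> = 0" by (rule psd_bilinear_form_eq_0[OF symmetric psd assms(1)])
  finally have "bilinear_form S n (noise_coeffs W z) a = 0" .
  moreover have "bilinear_form S n (noise_coeffs W z) a = (\<Sum>k<n. if k = z then a z * (s z)\<^sup>2 else 0)"
  proof (subst bilinear_form_expand_right, rule sum.cong[OF refl])
    fix k assume k: "k \<in> {..<n}"
    show "a k * bilinear_form S n (noise_coeffs W z) (indicator {k}) = (if k = z then a z * (s z)\<^sup>2 else 0)"
    proof (cases "k = z \<or> a k = 0")
      case False
      with k maximal[of k] have "(z, k) \<notin> ?G\<^sup>*" by (auto simp: rtrancl_eq_or_trancl)
      with False k z show ?thesis by (simp add: noise_uncorrelated)
    qed (use z noise_covariance_own in auto)
  qed
  ultimately have "a z * (s z)\<^sup>2 = 0" using z by simp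
  with z noise_sd_pos[of z] show False by simp
qed

text \<open>The row difference is supported on non-descendants of \<open>j\<close> in \<open>W'\<close>, so it is uncorrelated
  with the noise of \<open>j\<close> under \<open>W'\<close>: Pythagoras.\<close>
lemma noise_variance_decomposition:
  assumes other: "sem_covariance n W' s' S" and closed: "parent_closed n W' T"
    and j: "j < n" "j \<notin> T" and parents: "\<And>i. i < n \<Longrightarrow> W j i \<noteq> 0 \<Longrightarrow> i \<in> T"
  shows "(s j)\<^sup>2 = (s' j)\<^sup>2 + bilinear_form S n (\<lambda>i. W' j i - W j i) (\<lambda>i. W' j i - W j i)"
proof -
  define v where "v = (\<lambda>i. W' j i - W j i)"
  have acyclic': "acyclic (graph_of n W')" using other by (rule sem_covariance.acyclic_graph)
  have orth: "bilinear_form S n (noise_coeffs W' j) v = 0"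
  proof (rule sem_covariance.noise_uncorrelated_combination[OF other j(1)])
    fix k assume k: "k < n" "v k \<noteq> 0"
    then consider "W' j k \<noteq> 0" | "W j k \<noteq> 0" by (force simp: v_def)
    then show "(j, k) \<notin> (graph_of n W')\<^sup>*"
      by cases (use parent_not_descendant[OF acyclic' k(1) j(1)]
          parent_closed_not_descendant[OF closed j(2)] parents k(1) in auto)
  qed
  have "noise_coeffs W j = (\<lambda>i. noise_coeffs W' j i + v i)"
    by (simp add: noise_coeffs_def v_def fun_eq_iff)
  then have "bilinear_form S n (noise_coeffs W j) (noise_coeffs W j)
      = bilinear_form S n (noise_coeffs W' j) (noise_coeffs W' j) + bilinear_form S n v v"
    using orth bilinear_form_commute[OF symmetric, where a = v and b = "noise_coeffs W' j"]
    by (simp add: bilinear_form_add_left bilinear_form_add_right)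
  then show ?thesis
    using noise_variance[OF j(1)] sem_covariance.noise_variance[OF other j(1)] by (simp add: v_def)
qed

lemma noise_variance_comparison:
  assumes "sem_covariance n W' s' S" "parent_closed n W' T"
    and "j < n" "j \<notin> T" "\<And>i. i < n \<Longrightarrow> W j i \<noteq> 0 \<Longrightarrow> i \<in> T"
  shows "(s' j)\<^sup>2 \<le> (s j)\<^sup>2"
    and "(s' j)\<^sup>2 = (s j)\<^sup>2 \<Longrightarrow> i < n \<Longrightarrow> W' j i = W j i"
  using noise_variance_decomposition[OF assms] psd positive_definite[of "\<lambda>i. W' j i - W j i" i] by auto

lemma sink_row_unique:
  assumes other: "sem_covariance n W' s' S" and "j < n" "i < n"
    and sink: "\<And>k. k < n \<Longrightarrow> W k j = 0" and sink': "\<And>k. k < n \<Longrightarrow> W' k j = 0"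
  shows "W' j i = W j i"
proof -
  define v where "v = (\<lambda>i. W' j i - W j i)"
  have "v j = 0" using sink sink' \<open>j < n\<close> by (simp add: v_def)
  then have no_descendant: "(j, k) \<notin> (graph_of n V)\<^sup>*"
    if "\<And>k. k < n \<Longrightarrow> V k j = 0" "v k \<noteq> 0" for V k
    using that sink_not_descendant[of n V j k] by auto
  have "v = (\<lambda>i. noise_coeffs W j i - noise_coeffs W' j i)"
    by (simp add: noise_coeffs_def v_def fun_eq_iff)
  then have "bilinear_form S n v v
      = bilinear_form S n (noise_coeffs W j) v - bilinear_form S n (noise_coeffs W' j) v"
    by (metis bilinear_form_diff_left)
  also have "\<dots> = 0"
    using noise_uncorrelated_combination[OF \<open>j < n\<close> no_descendant[of W, OF sink]]
      sem_covariance.noise_uncorrelated_combination[OF other \<open>j < n\<close> no_descendant[of W', OF sink']]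
    by simp
  finally show ?thesis using positive_definite[of v i] \<open>i < n\<close> by (simp add: v_def)
qed

end

section \<open>Identifiability under equal mediator variances\<close>

lemma mediator_row_step:
  assumes cov: "sem_covariance (d + 2) W s S" and cov': "sem_covariance (d + 2) W' s' S"
    and A2: "A2 d W" "A2 d W'"
    and sd: "\<And>j. 1 \<le> j \<Longrightarrow> j \<le> d \<Longrightarrow> s j = \<sigma>" and sd': "\<And>j. 1 \<le> j \<Longrightarrow> j \<le> d \<Longrightarrow> s' j = \<sigma>'"
    and T: "0 \<in> T" "parent_closed (d + 2) W T" "parent_closed (d + 2) W' T"
    and "x \<in> {..d} - T"
  obtains j where "j \<in> {..d} - T" "\<And>i. i < d + 2 \<Longrightarrow> W j i \<noteq> 0 \<Longrightarrow> i \<in> T"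
    "\<And>i. i < d + 2 \<Longrightarrow> W' j i = W j i"
proof -
  let ?R = "{..d} - T"
  have parents_in_T: "i \<in> T"
    if "A2 d V" "m \<in> ?R" "\<And>i. i < d + 2 \<Longrightarrow> V m i \<noteq> 0 \<Longrightarrow> i \<notin> ?R" "i < d + 2" "V m i \<noteq> 0"
    for V m i
    using that by (cases "i = d + 1") (auto simp: A2_def)
  obtain j where j: "j \<in> ?R" "\<And>i. i < d + 2 \<Longrightarrow> W j i \<noteq> 0 \<Longrightarrow> i \<notin> ?R"
    using sem_covariance.acyclic_graph[OF cov] \<open>x \<in> ?R\<close>
    by (rule acyclic_graph_of_obtain_source) auto
  obtain k where k: "k \<in> ?R" "\<And>i. i < d + 2 \<Longrightarrow> W' k i \<noteq> 0 \<Longrightarrow> i \<notin> ?R"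
    using sem_covariance.acyclic_graph[OF cov'] \<open>x \<in> ?R\<close>
    by (rule acyclic_graph_of_obtain_source) auto
  note parents_j = parents_in_T[OF A2(1) j] and parents_k = parents_in_T[OF A2(2) k]
  have j_node: "j < d + 2" "j \<notin> T" and k_node: "k < d + 2" "k \<notin> T"
    using j(1) k(1) by auto
  have mediators: "1 \<le> j" "j \<le> d" "1 \<le> k" "k \<le> d"
    using j(1) k(1) T(1) by (metis DiffD2 less_one not_le, simp)+
  have "(s' j)\<^sup>2 \<le> (s j)\<^sup>2"
    by (rule sem_covariance.noise_variance_comparison(1)[OF cov cov' T(3) j_node parents_j])
  moreover have "(s k)\<^sup>2 \<le> (s' k)\<^sup>2"
    by (rule sem_covariance.noise_variance_comparison(1)[OF cov' cov T(2) k_node parents_k])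
  ultimately have "(s' j)\<^sup>2 = (s j)\<^sup>2" using mediators sd sd' by simp
  then have "W' j i = W j i" if "i < d + 2" for i
    using sem_covariance.noise_variance_comparison(2)[OF cov cov' T(3) j_node parents_j] that
    by blast
  with j(1) parents_j show thesis by (rule that)
qed

lemma mediator_rows_unique:
  assumes cov: "sem_covariance (d + 2) W s S" and cov': "sem_covariance (d + 2) W' s' S"
    and A2: "A2 d W" "A2 d W'"
    and sd: "\<And>j. 1 \<le> j \<Longrightarrow> j \<le> d \<Longrightarrow> s j = \<sigma>" and sd': "\<And>j. 1 \<le> j \<Longrightarrow> j \<le> d \<Longrightarrow> s' j = \<sigma>'"
  shows "T \<subseteq> {..d} \<Longrightarrow> 0 \<in> T \<Longrightarrow> parent_closed (d + 2) W T \<Longrightarrow> parent_closed (d + 2) W' T \<Longrightarrow>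
    (\<forall>j\<in>T. \<forall>i<d + 2. W' j i = W j i) \<Longrightarrow> j \<le> d \<Longrightarrow> i < d + 2 \<Longrightarrow> W' j i = W j i"
proof (induction "card ({..d} - T)" arbitrary: T rule: less_induct)
  case less
  show ?case
  proof (cases "j \<in> T")
    case False
    with less.prems have "j \<in> {..d} - T" by simp
    with mediator_row_step[OF cov cov' A2 sd sd' less.prems(2-4)]
    obtain j' where j': "j' \<in> {..d} - T" and parents: "\<And>i. i < d + 2 \<Longrightarrow> W j' i \<noteq> 0 \<Longrightarrow> i \<in> T"
      and row: "\<And>i. i < d + 2 \<Longrightarrow> W' j' i = W j' i"
      by blast
    show ?thesis
    proof (rule less.hyps[of "insert j' T"])
      have "{..d} - insert j' T = ({..d} - T) - {j'}" by blast
      then show "card ({..d} - insert j' T) < card ({..d} - T)"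
        using j' by (metis card_Diff1_less finite_Diff finite_atMost)
      show "insert j' T \<subseteq> {..d}" "0 \<in> insert j' T"
        using less.prems(1,2) j' by auto
      show "parent_closed (d + 2) W (insert j' T)"
        using less.prems(3) parents unfolding parent_closed_def by blast
      show "parent_closed (d + 2) W' (insert j' T)"
        using less.prems(4) parents row unfolding parent_closed_def by (metis insert_iff)
      show "\<forall>j\<in>insert j' T. \<forall>i<d + 2. W' j i = W j i"
        using less.prems(5) row by simp
    qed (use less.prems(6,7) in simp_all)
  qed (use less.prems(5,7) in simp)
qed

lemma sem_covariance_identifiable:
  assumes cov: "sem_covariance (d + 2) W s S" and cov': "sem_covariance (d + 2) W' s' S"
    and A2: "A2 d W" "A2 d W'"
    and sd: "\<And>j. 1 \<le> j \<Longrightarrow> j \<le> d \<Longrightarrow> s j = \<sigma>" and sd': "\<And>j. 1 \<le> j \<Longrightarrow> j \<le> d \<Longrightarrow> s' j = \<sigma>'"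
    and "j < d + 2" "i < d + 2"
  shows "W' j i = W j i"
proof (cases "j = d + 1")
  case True
  have "V k (d + 1) = 0" if "A2 d V" "k < d + 2" for V k
    using that by (simp add: A2_def)
  with A2 show ?thesis
    unfolding True by (intro sem_covariance.sink_row_unique[OF cov cov']) (use \<open>i < d + 2\<close> in auto)
next
  case False
  with \<open>j < d + 2\<close> have "j \<le> d" by simp
  have "parent_closed (d + 2) V {0}" if "A2 d V" for V
    using that by (simp add: parent_closed_def A2_def)
  moreover have "\<forall>j\<in>{0}. \<forall>i<d + 2. W' j i = W j i"
    using A2 by (simp add: A2_def)
  ultimately show ?thesis
    using A2 \<open>j \<le> d\<close> \<open>i < d + 2\<close>
    by (intro mediator_rows_unique[OF cov cov' A2 sd sd', of "{0}"]) simp_all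
qed

section \<open>Gaussian linear SEMs\<close>

lemma acyclic_linear_system_node_solution:
  fixes z e :: "'a \<Rightarrow> nat \<Rightarrow> real"
  assumes acyclic: "acyclic (graph_of n W)"
    and system: "\<And>\<omega> j. \<omega> \<in> \<Omega> \<Longrightarrow> j < n \<Longrightarrow> z \<omega> j = (\<Sum>i<n. W j i * z \<omega> i) + e \<omega> j"
    and "i < n"
  shows "\<exists>c. (\<forall>\<omega>\<in>\<Omega>. z \<omega> i = (\<Sum>l<n. c l * e \<omega> l)) \<and> (\<forall>l<n. c l \<noteq> 0 \<longrightarrow> (l, i) \<in> (graph_of n W)\<^sup>*)"
  using \<open>i < n\<close>
proof (induction i rule: wf_induct_rule[OF finite_acyclic_wf[OF finite_graph_of acyclic]])
  case (1 i)
  let ?G = "graph_of n W"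
  have "\<forall>k\<in>{k. k < n \<and> W i k \<noteq> 0}. \<exists>c. (\<forall>\<omega>\<in>\<Omega>. z \<omega> k = (\<Sum>l<n. c l * e \<omega> l)) \<and> (\<forall>l<n. c l \<noteq> 0 \<longrightarrow> (l, k) \<in> ?G\<^sup>*)"
  proof
    fix k assume "k \<in> {k. k < n \<and> W i k \<noteq> 0}"
    with 1(2) have "(k, i) \<in> ?G" "k < n" by (simp_all add: graph_of_def)
    then show "\<exists>c. (\<forall>\<omega>\<in>\<Omega>. z \<omega> k = (\<Sum>l<n. c l * e \<omega> l)) \<and> (\<forall>l<n. c l \<noteq> 0 \<longrightarrow> (l, k) \<in> ?G\<^sup>*)"
      by (rule 1(1))
  qed
  from bchoice[OF this] obtain C where C: "\<forall>k\<in>{k. k < n \<and> W i k \<noteq> 0}.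
      (\<forall>\<omega>\<in>\<Omega>. z \<omega> k = (\<Sum>l<n. C k l * e \<omega> l)) \<and> (\<forall>l<n. C k l \<noteq> 0 \<longrightarrow> (l, k) \<in> ?G\<^sup>*)"
    by blast
  define c where "c l = (\<Sum>k<n. W i k * C k l) + indicator {i} l" for l
  have "z \<omega> i = (\<Sum>l<n. c l * e \<omega> l)" if "\<omega> \<in> \<Omega>" for \<omega>
  proof -
    have "(\<Sum>k<n. W i k * z \<omega> k) = (\<Sum>k<n. W i k * (\<Sum>l<n. C k l * e \<omega> l))"
      using C that by (intro sum.cong) auto
    also have "\<dots> = (\<Sum>l<n. \<Sum>k<n. W i k * C k l * e \<omega> l)"
      by (subst sum.swap) (simp add: sum_distrib_left mult.assoc)
    also have "\<dots> = (\<Sum>l<n. (\<Sum>k<n. W i k * C k l) * e \<omega> l)"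
      by (simp add: sum_distrib_right)
    finally show ?thesis
      using system[OF that 1(2)] 1(2) by (simp add: c_def distrib_right sum.distrib indicator_times_eq_if)
  qed
  moreover have "(l, i) \<in> ?G\<^sup>*" if "l < n" "c l \<noteq> 0" for l
  proof (cases "l = i")
    case False
    with that(2) obtain k where k: "k < n" "W i k * C k l \<noteq> 0"
      by (auto simp: c_def intro: sum.not_neutral_contains_not_neutral)
    with C that(1) have "(l, k) \<in> ?G\<^sup>*" by simp
    moreover have "(k, i) \<in> ?G" using k 1(2) by (simp add: graph_of_def)
    ultimately show ?thesis by (rule rtrancl_into_rtrancl)
  qed simp
  ultimately show ?case by blast
qed

lemma acyclic_linear_system_solution:
  fixes z e :: "'a \<Rightarrow> nat \<Rightarrow> real"
  assumes "acyclic (graph_of n W)"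
    and "\<And>\<omega> j. \<omega> \<in> \<Omega> \<Longrightarrow> j < n \<Longrightarrow> z \<omega> j = (\<Sum>i<n. W j i * z \<omega> i) + e \<omega> j"
  shows "\<exists>C. (\<forall>\<omega>\<in>\<Omega>. \<forall>i<n. z \<omega> i = (\<Sum>l<n. C i l * e \<omega> l)) \<and>
    (\<forall>i<n. \<forall>l<n. C i l \<noteq> 0 \<longrightarrow> (l, i) \<in> (graph_of n W)\<^sup>*)"
proof -
  have "\<forall>i\<in>{..<n}. \<exists>c. (\<forall>\<omega>\<in>\<Omega>. z \<omega> i = (\<Sum>l<n. c l * e \<omega> l)) \<and>
      (\<forall>l<n. c l \<noteq> 0 \<longrightarrow> (l, i) \<in> (graph_of n W)\<^sup>*)"
    using acyclic_linear_system_node_solution[where \<Omega> = \<Omega> and z = z and e = e, OF assms] by simp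
  from bchoice[OF this] show ?thesis by auto
qed

lemma (in prob_space) expectation_indep_lincomb_product:
  fixes e :: "nat \<Rightarrow> 'a \<Rightarrow> real"
  assumes "finite I" "indep_vars (\<lambda>_. borel) e I"
    and integrable: "\<And>l. l \<in> I \<Longrightarrow> integrable M (e l)"
    and square_integrable: "\<And>l. l \<in> I \<Longrightarrow> integrable M (\<lambda>\<omega>. (e l \<omega>)\<^sup>2)"
    and centered: "\<And>l. l \<in> I \<Longrightarrow> expectation (e l) = 0"
  shows "integrable M (\<lambda>\<omega>. (\<Sum>l\<in>I. a l * e l \<omega>) * (\<Sum>m\<in>I. b m * e m \<omega>))"
    and "expectation (\<lambda>\<omega>. (\<Sum>l\<in>I. a l * e l \<omega>) * (\<Sum>m\<in>I. b m * e m \<omega>))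
      = (\<Sum>l\<in>I. a l * b l * expectation (\<lambda>\<omega>. (e l \<omega>)\<^sup>2))"
proof -
  have pair: "integrable M (\<lambda>\<omega>. e l \<omega> * e m \<omega>) \<and>
      expectation (\<lambda>\<omega>. e l \<omega> * e m \<omega>) = (if l = m then expectation (\<lambda>\<omega>. (e l \<omega>)\<^sup>2) else 0)"
    if "l \<in> I" "m \<in> I" for l m
  proof (cases "l = m")
    case False
    have indep: "indep_vars (\<lambda>_. borel) e {l, m}"
      using assms(2) by (rule indep_vars_subset) (use that in auto)
    have "\<And>i. i \<in> {l, m} \<Longrightarrow> integrable M (e i)" using integrable that by auto
    from indep_vars_lebesgue_integral[OF _ indep this] indep_vars_integrable[OF _ indep this]
    show ?thesis using False centered that by simp
  next
    case True
    with square_integrable[OF that(1)] show ?thesis by (simp add: power2_eq_square)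
  qed
  have expand: "(\<Sum>l\<in>I. a l * e l \<omega>) * (\<Sum>m\<in>I. b m * e m \<omega>) = (\<Sum>l\<in>I. \<Sum>m\<in>I. a l * b m * (e l \<omega> * e m \<omega>))"
    for \<omega> by (simp add: sum_product mult_ac)
  show "integrable M (\<lambda>\<omega>. (\<Sum>l\<in>I. a l * e l \<omega>) * (\<Sum>m\<in>I. b m * e m \<omega>))"
    unfolding expand using pair
    by (intro Bochner_Integration.integrable_sum Bochner_Integration.integrable_mult_right) blast
  have "expectation (\<lambda>\<omega>. (\<Sum>l\<in>I. a l * e l \<omega>) * (\<Sum>m\<in>I. b m * e m \<omega>))
      = (\<Sum>l\<in>I. \<Sum>m\<in>I. a l * b m * expectation (\<lambda>\<omega>. e l \<omega> * e m \<omega>))"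
    unfolding expand using pair by (simp add: Bochner_Integration.integral_sum)
  also have "\<dots> = (\<Sum>l\<in>I. \<Sum>m\<in>I. if l = m then a l * b l * expectation (\<lambda>\<omega>. (e l \<omega>)\<^sup>2) else 0)"
    using pair by (intro sum.cong) auto
  also have "\<dots> = (\<Sum>l\<in>I. a l * b l * expectation (\<lambda>\<omega>. (e l \<omega>)\<^sup>2))"
    using \<open>finite I\<close> by simp
  finally show "expectation (\<lambda>\<omega>. (\<Sum>l\<in>I. a l * e l \<omega>) * (\<Sum>m\<in>I. b m * e m \<omega>))
      = (\<Sum>l\<in>I. a l * b l * expectation (\<lambda>\<omega>. (e l \<omega>)\<^sup>2))" .
qed

definition covariance_matrix :: "(nat \<Rightarrow> real) measure \<Rightarrow> nat \<Rightarrow> nat \<Rightarrow> real"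
  where "covariance_matrix P i k = (\<integral>x. (x i - (\<integral>y. y i \<partial>P)) * (x k - (\<integral>y. y k \<partial>P)) \<partial>P)"

lemma integral_law:
  fixes f :: "(nat \<Rightarrow> real) \<Rightarrow> real"
  assumes "\<And>j. j < d + 2 \<Longrightarrow> (\<lambda>\<omega>. X \<omega> j) \<in> borel_measurable M"
    and "f \<in> borel_measurable (PiM {..<d + 2} (\<lambda>_. borel))"
  shows "(\<integral>x. f x \<partial>law M d X) = (\<integral>\<omega>. f (restrict (X \<omega>) {..<d + 2}) \<partial>M)"
  unfolding law_def using assms by (intro integral_distr measurable_restrict) simp_all

lemma covariance_matrix_law:
  assumes measurable: "\<And>j. j < d + 2 \<Longrightarrow> (\<lambda>\<omega>. X \<omega> j) \<in> borel_measurable M"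
    and "i < d + 2" "k < d + 2"
  shows "covariance_matrix (law M d X) i k
    = (\<integral>\<omega>. (X \<omega> i - (\<integral>\<omega>. X \<omega> i \<partial>M)) * (X \<omega> k - (\<integral>\<omega>. X \<omega> k \<partial>M)) \<partial>M)"
proof -
  have component: "(\<lambda>x. x j) \<in> borel_measurable (PiM {..<d + 2} (\<lambda>_. borel))" if "j < d + 2" for j
    using that by simp
  have mean: "(\<integral>x. x j \<partial>law M d X) = (\<integral>\<omega>. X \<omega> j \<partial>M)" if "j < d + 2" for j
    using integral_law[OF measurable component[OF that]] that by simp
  have "(\<lambda>x. (x i - c) * (x k - c')) \<in> borel_measurable (PiM {..<d + 2} (\<lambda>_. borel))"
    for c c' :: real using component[OF assms(2)] component[OF assms(3)] by measurable
  then show ?thesis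
    unfolding covariance_matrix_def mean[OF assms(2)] mean[OF assms(3)]
    using assms(2,3) by (subst integral_law[OF measurable]) auto
qed

lemma (in prob_space) bilinear_form_expectation:
  assumes "\<And>i k. i < n \<Longrightarrow> k < n \<Longrightarrow> integrable M (\<lambda>\<omega>. Z \<omega> i * Z \<omega> k)"
    and "\<And>i k. i < n \<Longrightarrow> k < n \<Longrightarrow> S i k = expectation (\<lambda>\<omega>. Z \<omega> i * Z \<omega> k)"
  shows "bilinear_form S n a b = expectation (\<lambda>\<omega>. (\<Sum>i<n. a i * Z \<omega> i) * (\<Sum>k<n. b k * Z \<omega> k))"
proof -
  have integrable: "integrable M (\<lambda>\<omega>. a i * b k * (Z \<omega> i * Z \<omega> k))" if "i < n" "k < n" for i k
    using assms(1)[OF that] by (rule Bochner_Integration.integrable_mult_right)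
  have "(\<Sum>i<n. a i * Z \<omega> i) * (\<Sum>k<n. b k * Z \<omega> k) = (\<Sum>i<n. \<Sum>k<n. a i * b k * (Z \<omega> i * Z \<omega> k))" for \<omega>
    by (simp add: sum_product mult_ac)
  then have "expectation (\<lambda>\<omega>. (\<Sum>i<n. a i * Z \<omega> i) * (\<Sum>k<n. b k * Z \<omega> k))
      = expectation (\<lambda>\<omega>. \<Sum>i<n. \<Sum>k<n. a i * b k * (Z \<omega> i * Z \<omega> k))"
    by simp
  also have "\<dots> = (\<Sum>i<n. expectation (\<lambda>\<omega>. \<Sum>k<n. a i * b k * (Z \<omega> i * Z \<omega> k)))"
    using integrable by (intro Bochner_Integration.integral_sum Bochner_Integration.integrable_sum) auto
  also have "\<dots> = (\<Sum>i<n. \<Sum>k<n. expectation (\<lambda>\<omega>. a i * b k * (Z \<omega> i * Z \<omega> k)))"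
    using integrable by (intro sum.cong refl Bochner_Integration.integral_sum) auto
  finally show ?thesis
    using assms(2) by (simp add: bilinear_form_def mult_ac)
qed

locale linear_sem =
  fixes M :: "'a measure" and d :: nat and W :: "nat \<Rightarrow> nat \<Rightarrow> real"
    and X \<epsilon> :: "'a \<Rightarrow> nat \<Rightarrow> real" and s :: "nat \<Rightarrow> real" and \<sigma> :: real
  assumes model: "sem_model M d W X \<epsilon> s \<sigma>"
begin

sublocale prob_space M
  using model by (simp add: sem_model_def)

definition centered :: "'a \<Rightarrow> nat \<Rightarrow> real"
  where "centered \<omega> j = X \<omega> j - expectation (\<lambda>\<omega>. X \<omega> j)"

lemma X_measurable: "j < d + 2 \<Longrightarrow> (\<lambda>\<omega>. X \<omega> j) \<in> borel_measurable M"
  using model by (simp add: sem_model_def)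

lemma acyclic_graph: "acyclic (graph_of (d + 2) W)"
  using model by (simp add: sem_model_def A1_def)

lemma noise_normal:
  assumes "l < d + 2"
  shows "0 < s l" and "distributed M lborel (\<lambda>\<omega>. \<epsilon> \<omega> l) (normal_density 0 (s l))"
  using model assms by (simp_all add: sem_model_def)

lemma noise_lincomb_product:
  shows "integrable M (\<lambda>\<omega>. (\<Sum>l<d + 2. a l * \<epsilon> \<omega> l) * (\<Sum>l<d + 2. b l * \<epsilon> \<omega> l))"
    and "expectation (\<lambda>\<omega>. (\<Sum>l<d + 2. a l * \<epsilon> \<omega> l) * (\<Sum>l<d + 2. b l * \<epsilon> \<omega> l))
      = (\<Sum>l<d + 2. a l * b l * (s l)\<^sup>2)"
proof -
  have indep: "indep_vars (\<lambda>_. borel) (\<lambda>l \<omega>. \<epsilon> \<omega> l) {..<d + 2}"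
    using model by (simp add: sem_model_def)
  have mean: "expectation (\<lambda>\<omega>. \<epsilon> \<omega> l) = 0" and second_moment: "expectation (\<lambda>\<omega>. (\<epsilon> \<omega> l)\<^sup>2) = (s l)\<^sup>2"
    and integrable: "integrable M (\<lambda>\<omega>. \<epsilon> \<omega> l)"
    and square_integrable: "integrable M (\<lambda>\<omega>. (\<epsilon> \<omega> l)\<^sup>2)"
    if "l \<in> {..<d + 2}" for l
  proof -
    from that have l: "l < d + 2" by simp
    show mean: "expectation (\<lambda>\<omega>. \<epsilon> \<omega> l) = 0"
      using normal_distributed_expectation[OF noise_normal[OF l]] by simp
    show "expectation (\<lambda>\<omega>. (\<epsilon> \<omega> l)\<^sup>2) = (s l)\<^sup>2"
      using normal_distributed_variance[OF noise_normal[OF l]] mean by simp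
    show "integrable M (\<lambda>\<omega>. \<epsilon> \<omega> l)"
      using distributed_integrable[OF noise_normal(2)[OF l], of "\<lambda>x. x"]
        integrable_normal_moment_nz_1[OF noise_normal(1)[OF l]] by simp
    show "integrable M (\<lambda>\<omega>. (\<epsilon> \<omega> l)\<^sup>2)"
      using distributed_integrable[OF noise_normal(2)[OF l], of "\<lambda>x. x\<^sup>2"]
        integrable_normal_moment[OF noise_normal(1)[OF l], of 0 2] by simp
  qed
  note product = expectation_indep_lincomb_product[OF _ indep, of a b]
  show "integrable M (\<lambda>\<omega>. (\<Sum>l<d + 2. a l * \<epsilon> \<omega> l) * (\<Sum>l<d + 2. b l * \<epsilon> \<omega> l))"
    by (rule product(1)) (simp_all only: finite_lessThan integrable square_integrable mean)
  have "expectation (\<lambda>\<omega>. (\<Sum>l<d + 2. a l * \<epsilon> \<omega> l) * (\<Sum>l<d + 2. b l * \<epsilon> \<omega> l))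
      = (\<Sum>l<d + 2. a l * b l * expectation (\<lambda>\<omega>. (\<epsilon> \<omega> l)\<^sup>2))"
    by (rule product(2)) (simp_all only: finite_lessThan integrable square_integrable mean)
  also have "\<dots> = (\<Sum>l<d + 2. a l * b l * (s l)\<^sup>2)"
    using second_moment by (intro sum.cong) auto
  finally show "expectation (\<lambda>\<omega>. (\<Sum>l<d + 2. a l * \<epsilon> \<omega> l) * (\<Sum>l<d + 2. b l * \<epsilon> \<omega> l))
      = (\<Sum>l<d + 2. a l * b l * (s l)\<^sup>2)" .
qed

lemma noise_covariance_lincomb:
  assumes "j < d + 2"
  shows "expectation (\<lambda>\<omega>. \<epsilon> \<omega> j * (\<Sum>l<d + 2. b l * \<epsilon> \<omega> l)) = b j * (s j)\<^sup>2"
proof -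
  have "(\<Sum>l<d + 2. indicator {j} l * b l * (s l)\<^sup>2) = b j * (s j)\<^sup>2"
    using sum_indicator_mult[OF assms, of "\<lambda>l. b l * (s l)\<^sup>2"] by (simp only: mult.assoc)
  with noise_lincomb_product(2)[of "indicator {j}" b] show ?thesis
    by (simp only: sum_indicator_mult[OF assms])
qed

lemma centered_structural_equation:
  "\<omega> \<in> space M \<Longrightarrow> j < d + 2 \<Longrightarrow> centered \<omega> j = (\<Sum>i<d + 2. W j i * centered \<omega> i) + \<epsilon> \<omega> j"
  using model unfolding sem_model_def centered_def by blast

lemma centered_noise_representation:
  "\<exists>C. (\<forall>\<omega>\<in>space M. \<forall>i<d + 2. centered \<omega> i = (\<Sum>l<d + 2. C i l * \<epsilon> \<omega> l)) \<and>
    (\<forall>i<d + 2. \<forall>l<d + 2. C i l \<noteq> 0 \<longrightarrow> (l, i) \<in> (graph_of (d + 2) W)\<^sup>*)"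
  by (rule acyclic_linear_system_solution[OF acyclic_graph centered_structural_equation])

lemma centered_product_integrable:
  assumes "i < d + 2" "k < d + 2"
  shows "integrable M (\<lambda>\<omega>. centered \<omega> i * centered \<omega> k)"
proof -
  obtain C where C: "\<forall>\<omega>\<in>space M. \<forall>i<d + 2. centered \<omega> i = (\<Sum>l<d + 2. C i l * \<epsilon> \<omega> l)"
    using centered_noise_representation by blast
  have "integrable M (\<lambda>\<omega>. centered \<omega> i * centered \<omega> k)
      \<longleftrightarrow> integrable M (\<lambda>\<omega>. (\<Sum>l<d + 2. C i l * \<epsilon> \<omega> l) * (\<Sum>l<d + 2. C k l * \<epsilon> \<omega> l))"
    using C assms by (intro Bochner_Integration.integrable_cong) simp_all
  with noise_lincomb_product(1) show ?thesis by simp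
qed

lemma bilinear_form_covariance_law:
  "bilinear_form (covariance_matrix (law M d X)) (d + 2) a b
    = expectation (\<lambda>\<omega>. (\<Sum>i<d + 2. a i * centered \<omega> i) * (\<Sum>k<d + 2. b k * centered \<omega> k))"
  using centered_product_integrable
proof (rule bilinear_form_expectation)
  fix i k assume "i < d + 2" "k < d + 2"
  then show "covariance_matrix (law M d X) i k = expectation (\<lambda>\<omega>. centered \<omega> i * centered \<omega> k)"
    using covariance_matrix_law[OF X_measurable] by (simp add: centered_def)
qed

lemma sem_covariance: "sem_covariance (d + 2) W s (covariance_matrix (law M d X))"
proof
  fix a j i
  show "covariance_matrix (law M d X) i j = covariance_matrix (law M d X) j i"
    by (simp add: covariance_matrix_def mult.commute)
  show "0 \<le> bilinear_form (covariance_matrix (law M d X)) (d + 2) a a"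
    unfolding bilinear_form_covariance_law by simp
  show "acyclic (graph_of (d + 2) W)" by (rule acyclic_graph)
  assume j: "j < d + 2"
  show "0 < s j" using j by (rule noise_normal)
  have noise: "(\<Sum>i<d + 2. noise_coeffs W j i * centered \<omega> i) = \<epsilon> \<omega> j" if "\<omega> \<in> space M" for \<omega>
    using noise_coeffs_solve[where z = "centered \<omega>" and W = W, OF j centered_structural_equation[OF that j]] .
  have "bilinear_form (covariance_matrix (law M d X)) (d + 2) (noise_coeffs W j) (noise_coeffs W j)
      = expectation (\<lambda>\<omega>. \<epsilon> \<omega> j * (\<Sum>l<d + 2. indicator {j} l * \<epsilon> \<omega> l))"
    unfolding bilinear_form_covariance_law
    by (intro Bochner_Integration.integral_cong) (simp_all only: noise sum_indicator_mult[OF j])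
  also have "\<dots> = indicator {j} j * (s j)\<^sup>2" by (rule noise_covariance_lincomb[OF j])
  finally show "bilinear_form (covariance_matrix (law M d X)) (d + 2) (noise_coeffs W j) (noise_coeffs W j) = (s j)\<^sup>2"
    by simp
  assume i: "i < d + 2" and not_descendant: "(j, i) \<notin> (graph_of (d + 2) W)\<^sup>*"
  obtain C where C: "\<forall>\<omega>\<in>space M. \<forall>i<d + 2. centered \<omega> i = (\<Sum>l<d + 2. C i l * \<epsilon> \<omega> l)"
    and ancestors: "\<forall>i<d + 2. \<forall>l<d + 2. C i l \<noteq> 0 \<longrightarrow> (l, i) \<in> (graph_of (d + 2) W)\<^sup>*"
    using centered_noise_representation by blast
  have "bilinear_form (covariance_matrix (law M d X)) (d + 2) (noise_coeffs W j) (indicator {i})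
      = expectation (\<lambda>\<omega>. \<epsilon> \<omega> j * (\<Sum>l<d + 2. C i l * \<epsilon> \<omega> l))"
    unfolding bilinear_form_covariance_law
    by (intro Bochner_Integration.integral_cong refl)
      (simp only: noise sum_indicator_mult[OF i], simp only: C[rule_format, OF _ i])
  also have "\<dots> = C i j * (s j)\<^sup>2" by (rule noise_covariance_lincomb[OF j])
  also have "C i j = 0" using ancestors i j not_descendant by blast
  finally show "bilinear_form (covariance_matrix (law M d X)) (d + 2) (noise_coeffs W j) (indicator {i}) = 0"
    by simp
qed

end

theorem lemma3:
  fixes M :: "'a measure" and M' :: "'b measure" and d :: nat
    and W W' :: "nat \<Rightarrow> nat \<Rightarrow> real"
    and X \<epsilon> :: "'a \<Rightarrow> nat \<Rightarrow> real" and X' \<epsilon>' :: "'b \<Rightarrow> nat \<Rightarrow> real"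
    and s s' :: "nat \<Rightarrow> real" and \<sigma> \<sigma>' :: real
  assumes "sem_model M d W X \<epsilon> s \<sigma>"
    and "sem_model M' d W' X' \<epsilon>' s' \<sigma>'"
    and "law M d X = law M' d X'"
  shows "\<forall>j < d + 2. \<forall>i < d + 2. W' j i = W j i"
proof (intro allI impI)
  fix j i assume "j < d + 2" "i < d + 2"
  let ?S = "covariance_matrix (law M d X)"
  have "sem_covariance (d + 2) W s ?S"
    using assms(1) by (intro linear_sem.sem_covariance linear_sem.intro)
  moreover have "sem_covariance (d + 2) W' s' ?S"
    using linear_sem.sem_covariance[OF linear_sem.intro, OF assms(2)] assms(3) by simp
  moreover have "A2 d W" "A2 d W'" "\<And>j. 1 \<le> j \<Longrightarrow> j \<le> d \<Longrightarrow> s j = \<sigma>" "\<And>j. 1 \<le> j \<Longrightarrow> j \<le> d \<Longrightarrow> s' j = \<sigma>'"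
    using assms(1,2) by (simp_all add: sem_model_def)
  ultimately show "W' j i = W j i"
    using sem_covariance_identifiable \<open>j < d + 2\<close> \<open>i < d + 2\<close> by blast
qed

end
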